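(* For all $A,B\in{\sf Frm}$: if $\vdash_{\sf WF_{N_2}}A\vee B$, then $\vdash_{\sf WF_{N_2}}A$ or $\vdash_{\sf WF_{N_2}}B$.
   Context: Language: countably many atoms $p,q,\dots$, the constant $\bot$, and binary connectives $\wedge,\vee,\rightarrow$ ($\rightarrow$ is strict implication). ${\sf Frm}$ is the set of formulas built from atoms and $\bot$ with $\wedge,\vee,\rightarrow$; $A,B,C,D$ range over ${\sf Frm}$. The Hilbert system ${\sf WF_{N_2}}$ over ${\sf Frm}$ has axiom schemes $A\rightarrow(A\vee B)$; $B\rightarrow(A\vee B)$; $(A\wedge B)\rightarrow A$; $(A\wedge B)\rightarrow B$; $A\wedge(B\vee C)\rightarrow(A\wedge B)\vee(A\wedge C)$; $A\rightarrow A$; $\bot\rightarrow A$; and rules (from theorems to a theorem): from $A$ and $A\rightarrow B$ infer $B$; from $A$ infer $B\rightarrow A$; from $A\rightarrow B$ and $B\rightarrow C$ infer $A\rightarrow C$; from $A\rightarrow B$ and $A\rightarrow C$ infer $A\rightarrow(B\wedge C)$; from $A\rightarrow C$ and $B\rightarrow C$ infer $(A\vee B)\rightarrow C$; from $A$ and $B$ infer $A\wedge B$; (${\sf N_2}$) from $C\rightarrow A\vee D$ and $C\wedge B\rightarrow D$ infer $(A\rightarrow B)\rightarrow(C\rightarrow D)$. $\vdash_{\sf WF_{N_2}}A$ means $A$ is a theorem of this system. *)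

theory Defs
  imports Main
begin

datatype frm =
    Atom nat
  | Bot
  | Conj frm frm
  | Disj frm frm
  | Imp frm frm

inductive thm_WFN2 :: "frm \<Rightarrow> bool" where
  ax_disjI1: "thm_WFN2 (Imp A (Disj A B))"
| ax_disjI2: "thm_WFN2 (Imp B (Disj A B))"
| ax_conjE1: "thm_WFN2 (Imp (Conj A B) A)"
| ax_conjE2: "thm_WFN2 (Imp (Conj A B) B)"
| ax_distr: "thm_WFN2 (Imp (Conj A (Disj B C)) (Disj (Conj A B) (Conj A C)))"
| ax_refl: "thm_WFN2 (Imp A A)"
| ax_bot: "thm_WFN2 (Imp Bot A)"
| r_mp: "thm_WFN2 A \<Longrightarrow> thm_WFN2 (Imp A B) \<Longrightarrow> thm_WFN2 B"
| r_weak: "thm_WFN2 A \<Longrightarrow> thm_WFN2 (Imp B A)"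
| r_trans: "thm_WFN2 (Imp A B) \<Longrightarrow> thm_WFN2 (Imp B C) \<Longrightarrow> thm_WFN2 (Imp A C)"
| r_conjI: "thm_WFN2 (Imp A B) \<Longrightarrow> thm_WFN2 (Imp A C) \<Longrightarrow> thm_WFN2 (Imp A (Conj B C))"
| r_disjE: "thm_WFN2 (Imp A C) \<Longrightarrow> thm_WFN2 (Imp B C) \<Longrightarrow> thm_WFN2 (Imp (Disj A B) C)"
| r_adj: "thm_WFN2 A \<Longrightarrow> thm_WFN2 B \<Longrightarrow> thm_WFN2 (Conj A B)"
| r_N2: "thm_WFN2 (Imp C (Disj A D)) \<Longrightarrow> thm_WFN2 (Imp (Conj C B) D)
         \<Longrightarrow> thm_WFN2 (Imp (Imp A B) (Imp C D))"

end

theory Submission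
  imports Defs
begin

text \<open>Aczel slash: F is slashed if it is a theorem and its main connective is
realized by slashed components, reading strict implication as a map from slashed
antecedents to slashed consequents. Every rule of WF_N2 preserves the slash, so
every theorem is slashed; a slashed disjunction has a slashed, hence provable, disjunct.\<close>

fun slashed :: "frm \<Rightarrow> bool" where
  "slashed (Atom n) = thm_WFN2 (Atom n)"
| "slashed Bot = False"
| "slashed (Conj A B) = (thm_WFN2 (Conj A B) \<and> slashed A \<and> slashed B)"
| "slashed (Disj A B) = (thm_WFN2 (Disj A B) \<and> (slashed A \<or> slashed B))"
| "slashed (Imp A B) = (thm_WFN2 (Imp A B) \<and> (slashed A \<longrightarrow> slashed B))"

lemma thm_WFN2_if_slashed: "slashed F \<Longrightarrow> thm_WFN2 F"
  by (cases F) auto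

lemma slashed_Imp_N2:
  assumes provable: "thm_WFN2 (Imp (Imp A B) (Imp C D))"
    and left: "slashed C \<Longrightarrow> slashed A \<or> slashed D"
    and right: "slashed (Conj C B) \<Longrightarrow> slashed D"
  shows "slashed (Imp (Imp A B) (Imp C D))"
proof -
  have "slashed (Imp C D)" if AB: "slashed (Imp A B)"
  proof -
    have "thm_WFN2 (Imp C D)"
      using thm_WFN2_if_slashed[OF AB] provable by (rule r_mp)
    moreover have "slashed D" if C: "slashed C"
    proof -
      have "thm_WFN2 (Conj C B)" if "slashed B"
        using C that by (auto intro: r_adj thm_WFN2_if_slashed)
      then show ?thesis
        using left[OF C] AB C right by auto
    qed
    ultimately show ?thesis by simp
  qed
  with provable show ?thesis by simp
qed

theorem slashed_if_thm_WFN2: "thm_WFN2 F \<Longrightarrow> slashed F"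
proof (induction rule: thm_WFN2.induct)
  case (ax_distr A B C)
  note ax = thm_WFN2.ax_distr[of A B C]
  show ?case
    using ax by (auto intro: thm_WFN2.intros r_mp[OF _ ax] thm_WFN2_if_slashed)
next
  case (r_N2 C A D B)
  then show ?case
    by (intro slashed_Imp_N2) (auto intro: thm_WFN2.r_N2)
qed (auto intro: thm_WFN2.intros thm_WFN2_if_slashed)

theorem corollary5p8:
  fixes A B :: frm
  assumes "thm_WFN2 (Disj A B)"
  shows "thm_WFN2 A \<or> thm_WFN2 B"
  using slashed_if_thm_WFN2[OF assms] by (auto dest: thm_WFN2_if_slashed)

end
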